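(* Let $\mathbb{K}$ be an algebraically closed field and let $(\Lambda_1,\Lambda_2,\Lambda_3)$ be a triangular dual $3$-net in $PG(2,\mathbb{K})$. Then every point of $\Lambda_1\cup\Lambda_2\cup\Lambda_3$ is the center of a unique involutory homology which preserves $(\Lambda_1,\Lambda_2,\Lambda_3)$.
   Context: A dual $3$-net of order $n$ in $PG(2,\mathbb{K})$ is a triple $(\Lambda_1,\Lambda_2,\Lambda_3)$ of pairwise disjoint point sets, each of size $n$, such that every line meeting two distinct components meets each component in exactly one point. A dual $3$-net of order $n\ge4$ is triangular if its three components lie respectively on the three sides of a triangle. An involutory homology is a projectivity of order $2$ of $PG(2,\mathbb{K})$ fixing pointwise a line (axis) and fixing a point (center) not on the axis. A projectivity preserves the dual $3$-net if it maps $\Lambda_1\cup\Lambda_2\cup\Lambda_3$ onto itself (permuting the components).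
   Formalization: The algebraically closed field $\mathbb{K}$ is further assumed to have characteristic different from 2. The paper assumes this as well. *)

theory Defs
  imports "HOL-Analysis.Analysis" "HOL-Computational_Algebra.Polynomial"
begin

definition alg_closed :: "'a::field itself \<Rightarrow> bool" where
  "alg_closed _ \<longleftrightarrow> (\<forall>p :: 'a poly. degree p > 0 \<longrightarrow> (\<exists>x. poly p x = 0))"

text \<open>The projective plane PG(2,K): a point is the set of nonzero scalar
  multiples of a nonzero vector of K^3.\<close>
type_synonym 'a pgpoint = "('a ^ 3) set"

definition pt :: "'a::field ^ 3 \<Rightarrow> 'a pgpoint" where
  "pt v = {c *s v | c. c \<noteq> 0}"

definition pg_points :: "'a::field pgpoint set" where
  "pg_points = {pt v | v. v \<noteq> 0}"

definition dot3 :: "'a::field ^ 3 \<Rightarrow> 'a ^ 3 \<Rightarrow> 'a" where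
  "dot3 u v = (\<Sum>i\<in>UNIV. u $ i * v $ i)"

definition line_of :: "'a::field ^ 3 \<Rightarrow> 'a pgpoint set" where
  "line_of u = {pt v | v. v \<noteq> 0 \<and> dot3 u v = 0}"

definition pg_lines :: "'a::field pgpoint set set" where
  "pg_lines = {line_of u | u. u \<noteq> 0}"

definition dual_3net :: "'a::field pgpoint set \<Rightarrow> 'a pgpoint set \<Rightarrow> 'a pgpoint set \<Rightarrow> nat \<Rightarrow> bool" where
  "dual_3net L1 L2 L3 n \<longleftrightarrow>
     (let L = (\<lambda>i::nat. if i = 0 then L1 else if i = 1 then L2 else L3) in
       (\<forall>i\<in>{0,1,2}. L i \<subseteq> pg_points \<and> finite (L i) \<and> card (L i) = n) \<and>
       (\<forall>i\<in>{0,1,2}. \<forall>j\<in>{0,1,2}. i \<noteq> j \<longrightarrow> L i \<inter> L j = {}) \<and>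
       (\<forall>l\<in>pg_lines. \<forall>i\<in>{0,1,2}. \<forall>j\<in>{0,1,2}.
          i \<noteq> j \<and> l \<inter> L i \<noteq> {} \<and> l \<inter> L j \<noteq> {} \<longrightarrow>
          (\<forall>k\<in>{0,1,2}. card (l \<inter> L k) = 1)))"

definition collinear_pts :: "'a::field pgpoint set \<Rightarrow> bool" where
  "collinear_pts S \<longleftrightarrow> (\<exists>l\<in>pg_lines. S \<subseteq> l)"

definition triangular_dual_3net :: "'a::field pgpoint set \<Rightarrow> 'a pgpoint set \<Rightarrow> 'a pgpoint set \<Rightarrow> nat \<Rightarrow> bool" where
  "triangular_dual_3net L1 L2 L3 n \<longleftrightarrow> dual_3net L1 L2 L3 n \<and> n \<ge> 4 \<and>
     (\<exists>A\<in>pg_points. \<exists>B\<in>pg_points. \<exists>C\<in>pg_points. \<not> collinear_pts {A, B, C} \<and>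
       (\<exists>l1\<in>pg_lines. \<exists>l2\<in>pg_lines. \<exists>l3\<in>pg_lines.
          B \<in> l1 \<and> C \<in> l1 \<and> A \<in> l2 \<and> C \<in> l2 \<and> A \<in> l3 \<and> B \<in> l3 \<and>
          L1 \<subseteq> l1 \<and> L2 \<subseteq> l2 \<and> L3 \<subseteq> l3))"

definition proj_of :: "'a::field ^ 3 ^ 3 \<Rightarrow> 'a pgpoint \<Rightarrow> 'a pgpoint" where
  "proj_of M = (\<lambda>P. if P \<in> pg_points then (\<lambda>v. M *v v) ` P else undefined)"

definition is_projectivity :: "('a::field pgpoint \<Rightarrow> 'a pgpoint) \<Rightarrow> bool" where
  "is_projectivity f \<longleftrightarrow> (\<exists>M. invertible M \<and> f = proj_of M)"

definition involutory_homology :: "('a::field pgpoint \<Rightarrow> 'a pgpoint) \<Rightarrow> 'a pgpoint \<Rightarrow> bool" where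
  "involutory_homology f P \<longleftrightarrow> is_projectivity f \<and>
     (\<forall>Q\<in>pg_points. f (f Q) = Q) \<and> (\<exists>Q\<in>pg_points. f Q \<noteq> Q) \<and>
     P \<in> pg_points \<and> f P = P \<and>
     (\<exists>l\<in>pg_lines. P \<notin> l \<and> (\<forall>Q\<in>l. f Q = Q))"

definition preserves_net :: "('a::field pgpoint \<Rightarrow> 'a pgpoint) \<Rightarrow> 'a pgpoint set \<Rightarrow> 'a pgpoint set \<Rightarrow> 'a pgpoint set \<Rightarrow> bool" where
  "preserves_net f L1 L2 L3 \<longleftrightarrow> f ` (L1 \<union> L2 \<union> L3) = L1 \<union> L2 \<union> L3"

end

theory Submission
  imports Defs
begin

text \<open>In coordinates, an involutory homology with center \<open>pt p\<close> acts as
  \<open>z \<mapsto> z + (v \<bullet> z) p\<close> for a linear form \<open>v\<close> with \<open>v \<bullet> p \<noteq> 0\<close>, whose kernel is the axis.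
  Let the center \<open>P \<in> \<Lambda>\<^sub>1\<close> lie on the side \<open>BC\<close> of the triangle \<open>ABC\<close> carrying the net.

  Existence: the harmonic homology with center \<open>P\<close> that fixes \<open>A\<close> and swaps \<open>B\<close> and \<open>C\<close>
  maps the side \<open>AC\<close> onto \<open>AB\<close> and \<open>BC\<close> onto itself, and fixes every line through \<open>P\<close>.
  A line through \<open>P\<close> meets \<open>\<Lambda>\<^sub>2\<close> and \<open>\<Lambda>\<^sub>3\<close> in one point each, so these two components
  are interchanged. \<open>\<Lambda>\<^sub>1\<close> is preserved, because a line through points of \<open>\<Lambda>\<^sub>1\<close>,
  \<open>\<Lambda>\<^sub>2\<close>, \<open>\<Lambda>\<^sub>3\<close> goes to a line through points of \<open>\<Lambda>\<^sub>3\<close> and \<open>\<Lambda>\<^sub>2\<close>, hence through a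
  point of \<open>\<Lambda>\<^sub>1\<close>, and the image of a point of \<open>\<Lambda>\<^sub>1\<close> stays on \<open>BC\<close>.

  Uniqueness: a net-preserving involutory homology with center \<open>P\<close> interchanges the two net
  points other than \<open>P\<close> on every line through \<open>P\<close>, since fixing them would put \<open>P\<close> on the
  axis. Hence any two such homologies agree on \<open>\<Lambda>\<^sub>2 \<union> \<Lambda>\<^sub>3\<close>, which contains three
  non-collinear points, and these values determine \<open>v\<close>.\<close>

definition cross3 :: "'a::field ^ 3 \<Rightarrow> 'a ^ 3 \<Rightarrow> 'a ^ 3" where
  "cross3 x y = vector [x$2 * y$3 - x$3 * y$2, x$3 * y$1 - x$1 * y$3, x$1 * y$2 - x$2 * y$1]"

definition det3 :: "'a::field ^ 3 \<Rightarrow> 'a ^ 3 \<Rightarrow> 'a ^ 3 \<Rightarrow> 'a" where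
  "det3 x y z = dot3 x (cross3 y z)"

lemma dot3_expand: "dot3 u v = u$1 * v$1 + u$2 * v$2 + u$3 * v$3"
  by (simp add: dot3_def sum_3)

lemma cross3_nth [simp]:
  "cross3 x y $ 1 = x$2 * y$3 - x$3 * y$2"
  "cross3 x y $ 2 = x$3 * y$1 - x$1 * y$3"
  "cross3 x y $ 3 = x$1 * y$2 - x$2 * y$1"
  by (simp_all add: cross3_def)

lemma det3_expand:
  "det3 x y z = x$1 * (y$2 * z$3 - y$3 * z$2) + x$2 * (y$3 * z$1 - y$1 * z$3)
     + x$3 * (y$1 * z$2 - y$2 * z$1)"
  by (simp add: det3_def dot3_expand)

lemma vec3_eq_iff: "(x::'a^3) = y \<longleftrightarrow> x$1 = y$1 \<and> x$2 = y$2 \<and> x$3 = y$3"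
  by (simp add: vec_eq_iff forall_3)

lemma vec3_neq_0_iff: "(x::'a::zero^3) \<noteq> 0 \<longleftrightarrow> x$1 \<noteq> 0 \<or> x$2 \<noteq> 0 \<or> x$3 \<noteq> 0"
  by (simp add: vec_eq_iff forall_3)

lemma dot3_commute: "dot3 u v = dot3 v u"
  by (simp add: dot3_expand mult.commute)

lemma dot3_simps:
  "dot3 u (x + y) = dot3 u x + dot3 u y"
  "dot3 u (x - y) = dot3 u x - dot3 u y"
  "dot3 (x + y) u = dot3 x u + dot3 y u"
  "dot3 (x - y) u = dot3 x u - dot3 y u"
  "dot3 u (c *s x) = c * dot3 u x"
  "dot3 (c *s u) x = c * dot3 u x"
  "dot3 u (- x) = - dot3 u x"
  "dot3 (- x) u = - dot3 x u"
  "dot3 0 x = 0" "dot3 x 0 = 0"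
  by (simp_all add: dot3_expand algebra_simps)

lemma det3_rotate: "det3 x y z = det3 y z x"
  by (simp add: det3_expand algebra_simps)

lemma det3_smult:
  "det3 (c *s x) y z = c * det3 x y z" "det3 x (c *s y) z = c * det3 x y z"
  "det3 x y (c *s z) = c * det3 x y z"
  by (simp_all add: det3_expand algebra_simps)

lemma dot3_cross3: "dot3 (cross3 x y) z = det3 z x y"
  by (simp add: det3_def dot3_commute)

lemma det3_repeated: "det3 x x y = 0" "det3 x y x = 0" "det3 y x x = 0"
  by (simp_all add: det3_expand algebra_simps)

lemma cramer3: "det3 a b c *s z = det3 z b c *s a + det3 a z c *s b + det3 a b z *s c"
  by (simp add: vec3_eq_iff det3_expand algebra_simps)

lemma det3_eq_0_if_orthogonal:
  fixes u x y z :: "'a::field^3"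
  assumes "u \<noteq> 0" "dot3 u x = 0" "dot3 u y = 0" "dot3 u z = 0"
  shows "det3 x y z = 0"
proof -
  have "det3 x y z * u$i = dot3 u x * cross3 y z $ i + dot3 u y * cross3 z x $ i
      + dot3 u z * cross3 x y $ i" if "i = 1 \<or> i = 2 \<or> i = 3" for i
    using that by (auto simp: det3_expand dot3_expand algebra_simps)
  moreover obtain i where "i = 1 \<or> i = 2 \<or> i = 3" "u$i \<noteq> 0"
    using assms(1) vec3_neq_0_iff by blast
  ultimately show ?thesis using assms(2-4) by force
qed

lemma dot3_eq_0_if_det3_eq_0:
  fixes w p q r :: "'a::field^3"
  assumes "cross3 q r \<noteq> 0" "dot3 w q = 0" "dot3 w r = 0" "det3 p q r = 0"
  shows "dot3 w p = 0"
proof -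
  have "w$1 * q$1 + w$2 * q$2 + w$3 * q$3 = 0" "w$1 * r$1 + w$2 * r$2 + w$3 * r$3 = 0"
    using assms(2,3) by (simp_all add: dot3_expand)
  then have "cross3 q r $ 1 * dot3 w p = w$1 * det3 p q r"
    "cross3 q r $ 2 * dot3 w p = w$2 * det3 p q r"
    "cross3 q r $ 3 * dot3 w p = w$3 * det3 p q r"
    unfolding dot3_expand det3_expand cross3_nth by algebra+
  moreover obtain i where "i = 1 \<or> i = 2 \<or> i = 3" "cross3 q r $ i \<noteq> 0"
    using assms(1) vec3_neq_0_iff by blast
  ultimately show ?thesis using assms(4) by force
qed

lemma exists_orthogonal2:
  fixes x y :: "'a::field^3"
  assumes "x \<noteq> 0"
  obtains u where "u \<noteq> 0" "dot3 u x = 0" "dot3 u y = 0"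
proof (cases "cross3 x y = 0")
  case False
  then show ?thesis
    by (intro that[of "cross3 x y"]) (auto simp: dot3_expand algebra_simps)
next
  case True
  then have c: "x$2 * y$3 = x$3 * y$2" "x$3 * y$1 = x$1 * y$3" "x$1 * y$2 = x$2 * y$1"
    by (auto simp: vec3_eq_iff)
  consider "x$1 \<noteq> 0" | "x$2 \<noteq> 0" | "x$3 \<noteq> 0" using assms vec3_neq_0_iff by blast
  then show ?thesis
  proof cases
    case 1
    show ?thesis
      by (rule that[of "vector [x$3, 0, - x$1]"])
        (use 1 c in \<open>auto simp: dot3_expand vec3_neq_0_iff algebra_simps\<close>)
  next
    case 2
    show ?thesis
      by (rule that[of "vector [- x$2, x$1, 0]"])
        (use 2 c in \<open>auto simp: dot3_expand vec3_neq_0_iff algebra_simps\<close>)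
  next
    case 3
    show ?thesis
      by (rule that[of "vector [0, - x$3, x$2]"])
        (use 3 c in \<open>auto simp: dot3_expand vec3_neq_0_iff algebra_simps\<close>)
  qed
qed

lemma independent_if_cross3_neq_0:
  fixes x y :: "'a::field^3"
  assumes "cross3 x y \<noteq> 0" "a *s x + b *s y = 0"
  shows "a = 0 \<and> b = 0"
proof -
  have e: "a * x$1 + b * y$1 = 0" "a * x$2 + b * y$2 = 0" "a * x$3 + b * y$3 = 0"
    using assms(2) by (auto simp: vec3_eq_iff)
  have "a * cross3 x y $ 1 = 0" "a * cross3 x y $ 2 = 0" "a * cross3 x y $ 3 = 0"
    "b * cross3 x y $ 1 = 0" "b * cross3 x y $ 2 = 0" "b * cross3 x y $ 3 = 0"
    using e unfolding cross3_nth by algebra+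
  moreover obtain i where "i = 1 \<or> i = 2 \<or> i = 3" "cross3 x y $ i \<noteq> 0"
    using assms(1) vec3_neq_0_iff by blast
  ultimately show ?thesis by force
qed

section \<open>Points and lines\<close>

lemma pt_smult: "c \<noteq> 0 \<Longrightarrow> pt (c *s x) = pt (x::'a::field^3)"
  unfolding pt_def
  by (auto simp: vector_smult_assoc) (metis divide_eq_0_iff nonzero_eq_divide_eq vector_smult_assoc)

lemma mem_pt_self: "x \<in> pt x"
  unfolding pt_def by (rule CollectI, rule exI[of _ 1]) simp

lemma pt_eqD: "pt x = pt y \<Longrightarrow> \<exists>c. c \<noteq> 0 \<and> x = c *s (y::'a::field^3)"
  using mem_pt_self[of x] unfolding pt_def by auto

lemma pt_in_pg_points: "x \<noteq> 0 \<Longrightarrow> pt x \<in> pg_points"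
  unfolding pg_points_def by auto

lemma pg_pointsE:
  assumes "Q \<in> pg_points" obtains q where "q \<noteq> 0" "Q = pt q"
  using assms unfolding pg_points_def by auto

lemma pg_linesE:
  assumes "l \<in> pg_lines" obtains u where "u \<noteq> 0" "l = line_of u"
  using assms unfolding pg_lines_def by auto

lemma line_of_in_pg_lines: "u \<noteq> 0 \<Longrightarrow> line_of u \<in> pg_lines"
  unfolding pg_lines_def by auto

lemma pg_lines_subset_points: "l \<in> pg_lines \<Longrightarrow> l \<subseteq> pg_points"
  unfolding pg_lines_def line_of_def using pt_in_pg_points by blast

lemma pt_in_line_of_iff: "x \<noteq> 0 \<Longrightarrow> pt x \<in> line_of u \<longleftrightarrow> dot3 u x = 0"
  unfolding line_of_def by (auto dest!: pt_eqD simp: dot3_simps)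

lemma pt_eq_if_cross3_eq_0:
  fixes x y :: "'a::field^3"
  assumes "x \<noteq> 0" "y \<noteq> 0" "cross3 x y = 0"
  shows "pt x = pt y"
proof -
  have c: "x$2 * y$3 = x$3 * y$2" "x$3 * y$1 = x$1 * y$3" "x$1 * y$2 = x$2 * y$1"
    using assms(3) by (auto simp: vec3_eq_iff)
  obtain j where j: "j = 1 \<or> j = 2 \<or> j = 3" "y$j \<noteq> 0" using assms(2) vec3_neq_0_iff by blast
  have x: "x = (x$j / y$j) *s y"
    using j c by (auto simp: vec3_eq_iff field_simps)
  with assms(1) have "x$j / y$j \<noteq> 0" by force
  with x show ?thesis using pt_smult by metis
qed

lemma cross3_neq_0_if_pt_neq: "x \<noteq> 0 \<Longrightarrow> y \<noteq> 0 \<Longrightarrow> pt x \<noteq> pt y \<Longrightarrow> cross3 x y \<noteq> 0"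
  using pt_eq_if_cross3_eq_0 by blast

lemma pt_add_smult_cancel:
  fixes p q :: "'a::field^3"
  assumes "cross3 p q \<noteq> 0" "pt (q + a *s p) = pt (q + b *s p)"
  shows "a = b"
proof -
  obtain c where "q + a *s p = c *s (q + b *s p)" using pt_eqD[OF assms(2)] by blast
  then have "(a - c * b) *s p + (1 - c) *s q = 0" by (simp add: vec3_eq_iff algebra_simps)
  then have "a - c * b = 0 \<and> 1 - c = 0" by (rule independent_if_cross3_neq_0[OF assms(1)])
  then show ?thesis by simp
qed

lemma exists_line_through:
  assumes "X \<in> pg_points" "Y \<in> pg_points"
  obtains l where "l \<in> pg_lines" "X \<in> l" "Y \<in> l"
proof -
  obtain x y where "x \<noteq> 0" "X = pt x" "y \<noteq> 0" "Y = pt y"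
    using assms by (metis pg_pointsE)
  moreover obtain u where "u \<noteq> 0" "dot3 u x = 0" "dot3 u y = 0"
    using exists_orthogonal2 \<open>x \<noteq> 0\<close> by blast
  ultimately show ?thesis
    using that[of "line_of u"] line_of_in_pg_lines pt_in_line_of_iff by metis
qed

lemma pg_lines_eqI:
  assumes "l \<in> pg_lines" "m \<in> pg_lines" "X \<noteq> Y" "X \<in> l" "Y \<in> l" "X \<in> m" "Y \<in> m"
  shows "l = m"
proof -
  have sub: "line_of u \<subseteq> line_of w"
    if uw: "u \<noteq> 0" "X \<in> line_of u" "Y \<in> line_of u" "X \<in> line_of w" "Y \<in> line_of w" for u w
  proof
    obtain x y where xy: "x \<noteq> 0" "X = pt x" "y \<noteq> 0" "Y = pt y"
      using uw(2,3) pg_lines_subset_points[OF line_of_in_pg_lines[OF uw(1)]] by (metis pg_pointsE subsetD)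
    then have orth: "dot3 u x = 0" "dot3 u y = 0" "dot3 w x = 0" "dot3 w y = 0"
      using uw(2-5) pt_in_line_of_iff by blast+
    have cr: "cross3 x y \<noteq> 0" using cross3_neq_0_if_pt_neq xy assms(3) by blast
    fix Z assume "Z \<in> line_of u"
    then obtain z where z: "z \<noteq> 0" "Z = pt z" "dot3 u z = 0" unfolding line_of_def by blast
    then have "det3 z x y = 0" using det3_eq_0_if_orthogonal uw(1) orth by blast
    then have "dot3 w z = 0" using dot3_eq_0_if_det3_eq_0 cr orth by blast
    then show "Z \<in> line_of w" using z pt_in_line_of_iff by blast
  qed
  obtain u w where "u \<noteq> 0" "l = line_of u" "w \<noteq> 0" "m = line_of w"
    using assms(1,2) by (metis pg_linesE)
  then show ?thesis using sub[of u w] sub[of w u] assms(4-7) by blast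
qed

lemma collinear_pts_pt_iff:
  fixes x y z :: "'a::field^3"
  assumes "x \<noteq> 0" "y \<noteq> 0" "z \<noteq> 0"
  shows "collinear_pts {pt x, pt y, pt z} \<longleftrightarrow> det3 x y z = 0"
proof
  assume "collinear_pts {pt x, pt y, pt z}"
  then obtain u where "u \<noteq> 0" "{pt x, pt y, pt z} \<subseteq> line_of u"
    unfolding collinear_pts_def by (metis pg_linesE)
  then show "det3 x y z = 0"
    using det3_eq_0_if_orthogonal pt_in_line_of_iff assms by (metis insert_subset)
next
  assume det: "det3 x y z = 0"
  show "collinear_pts {pt x, pt y, pt z}"
  proof (cases "pt x = pt y")
    case True
    obtain l where "l \<in> pg_lines" "pt x \<in> l" "pt z \<in> l"
      using exists_line_through pt_in_pg_points assms by metis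
    then show ?thesis unfolding collinear_pts_def using True by auto
  next
    case False
    then have cr: "cross3 x y \<noteq> 0" using cross3_neq_0_if_pt_neq assms by blast
    then have "dot3 (cross3 x y) x = 0" "dot3 (cross3 x y) y = 0" "dot3 (cross3 x y) z = 0"
      using det det3_rotate[of x y z] det3_rotate[of y z x] by (simp_all add: dot3_cross3 det3_repeated)
    then show ?thesis
      unfolding collinear_pts_def using assms cr line_of_in_pg_lines pt_in_line_of_iff
      by (metis empty_subsetI insert_subset)
  qed
qed

lemma distinct_if_not_collinear_pts:
  assumes "A \<in> pg_points" "C \<in> pg_points" "\<not> collinear_pts {A, B, C}"
  shows "A \<noteq> B"
  using assms exists_line_through[OF assms(1,2)] unfolding collinear_pts_def by auto

lemma proj_of_pt: "x \<noteq> 0 \<Longrightarrow> proj_of M (pt x) = pt (M *v x)"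
  unfolding proj_of_def pt_def using pt_in_pg_points[of x]
  by (force simp: pt_def vector_scalar_commute)

lemma invertible_mult_neq_0: "invertible (M::'a::field^3^3) \<Longrightarrow> x \<noteq> 0 \<Longrightarrow> M *v x \<noteq> 0"
  using inj_matrix_vector_mult[of M] by (metis injD matrix_vector_mult_0_right)

lemma dot3_vector_matrix_mult: "dot3 (u v* N) y = dot3 u (N *v y)"
  by (simp add: dot3_expand vector_matrix_mult_def matrix_vector_mult_def sum_3 algebra_simps)

text \<open>The image of \<open>line_of u\<close> under \<open>M\<close> lies on \<open>line_of (u v* N)\<close> for a left inverse \<open>N\<close> of \<open>M\<close>.\<close>
lemma projectivity_maps_lines:
  assumes "is_projectivity f" "l \<in> pg_lines"
  obtains m where "m \<in> pg_lines" "f ` l \<subseteq> m"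
proof -
  obtain M where M: "invertible M" "f = proj_of M"
    using assms(1) unfolding is_projectivity_def by blast
  then obtain N where N: "N ** M = mat 1" unfolding invertible_def by blast
  obtain u where u: "u \<noteq> 0" "l = line_of u" using assms(2) by (rule pg_linesE)
  define w where "w = u v* N"
  have dw: "dot3 w (M *v x) = dot3 u x" for x
    by (simp add: w_def dot3_vector_matrix_mult matrix_vector_mul_assoc N)
  have "w \<noteq> 0"
  proof
    assume "w = 0"
    then have "dot3 u x = 0" for x using dw[of x] by (simp add: dot3_expand)
    from this[of "vector [1, 0, 0]"] this[of "vector [0, 1, 0]"] this[of "vector [0, 0, 1]"]
    show False using u(1) by (simp add: dot3_expand vec3_neq_0_iff)
  qed
  moreover have "f ` l \<subseteq> line_of w"
  proof
    fix Y assume "Y \<in> f ` l"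
    then obtain x where "x \<noteq> 0" "dot3 u x = 0" "Y = f (pt x)"
      using u(2) unfolding line_of_def by blast
    then show "Y \<in> line_of w"
      using M dw invertible_mult_neq_0 proj_of_pt pt_in_line_of_iff by metis
  qed
  ultimately show ?thesis using that line_of_in_pg_lines by blast
qed

lemma projectivity_maps_line_into:
  assumes "is_projectivity f" "l \<in> pg_lines" "m \<in> pg_lines"
    and "X \<in> l" "Y \<in> l" "f X \<in> m" "f Y \<in> m" "f X \<noteq> f Y"
  shows "f ` l \<subseteq> m"
proof -
  obtain m' where m': "m' \<in> pg_lines" "f ` l \<subseteq> m'"
    using projectivity_maps_lines[OF assms(1,2)] .
  then have "m' = m" using pg_lines_eqI[OF m'(1) assms(3,8)] assms(4-7) by blast
  then show ?thesis using m'(2) by blast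
qed

section \<open>Involutory homologies\<close>

lemma matrix_scalar_on_fixed_line:
  fixes M :: "'a::field^3^3"
  assumes "w \<noteq> 0" and fixed: "\<And>x. x \<noteq> 0 \<Longrightarrow> dot3 w x = 0 \<Longrightarrow> \<exists>k. M *v x = k *s x"
  obtains lam where "\<And>x. dot3 w x = 0 \<Longrightarrow> M *v x = lam *s x"
proof -
  obtain x0 where x0: "x0 \<noteq> 0" "dot3 w x0 = 0"
    using exists_orthogonal2[OF assms(1), of w] dot3_commute by metis
  obtain lam where lam: "M *v x0 = lam *s x0" using fixed[OF x0] by blast
  have "M *v x = lam *s x" if x: "dot3 w x = 0" for x
  proof (cases "x = 0 \<or> cross3 x x0 = 0")
    case True
    then consider "x = 0" | "pt x = pt x0" using pt_eq_if_cross3_eq_0 x0(1) by blast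
    then show ?thesis
    proof cases
      case 2
      then obtain c where "x = c *s x0" using pt_eqD by blast
      then show ?thesis
        using lam by (simp add: vector_scalar_commute vector_smult_assoc mult.commute)
    qed simp
  next
    case False
    have "x + x0 \<noteq> 0"
    proof
      assume "x + x0 = 0"
      then have "x = - x0" by (simp add: eq_neg_iff_add_eq_0)
      then show False using False by (simp add: vec3_eq_iff algebra_simps)
    qed
    moreover have "dot3 w (x + x0) = 0" using x x0 by (simp add: dot3_simps)
    ultimately obtain nu where nu: "M *v (x + x0) = nu *s (x + x0)" using fixed by blast
    obtain k where k: "M *v x = k *s x" using fixed x False by blast
    have "(k - nu) *s x + (lam - nu) *s x0 = 0"
      using nu k lam by (simp add: matrix_vector_right_distrib vec3_eq_iff algebra_simps)
    then have "k - nu = 0 \<and> lam - nu = 0" using independent_if_cross3_neq_0 False by blast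
    then show ?thesis using k by simp
  qed
  then show ?thesis by (rule that)
qed

lemma proj_of_fixing_line_pointwise:
  fixes M :: "'a::field^3^3"
  assumes inv: "invertible M" and w: "w \<noteq> 0" and pointwise: "\<forall>Q\<in>line_of w. proj_of M Q = Q"
  obtains lam where "lam \<noteq> 0" "\<And>x. dot3 w x = 0 \<Longrightarrow> M *v x = lam *s x"
proof -
  have fixed: "\<exists>k. M *v x = k *s x" if "x \<noteq> 0" "dot3 w x = 0" for x
  proof -
    have "pt x \<in> line_of w" using that pt_in_line_of_iff by blast
    then have "proj_of M (pt x) = pt x" using pointwise by blast
    then have "pt (M *v x) = pt x" using proj_of_pt[OF that(1)] by simp
    then show ?thesis using pt_eqD by blast
  qed
  obtain lam where lam: "\<And>x. dot3 w x = 0 \<Longrightarrow> M *v x = lam *s x"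
    using matrix_scalar_on_fixed_line[OF w fixed] by blast
  have "lam \<noteq> 0"
  proof
    assume "lam = 0"
    obtain x0 where "x0 \<noteq> 0" "dot3 w x0 = 0"
      using exists_orthogonal2[OF w, of w] dot3_commute by metis
    then show False using lam \<open>lam = 0\<close> invertible_mult_neq_0[OF inv] by fastforce
  qed
  then show ?thesis by (rule that[OF _ lam])
qed

lemma matrix_scalar_plus_rank_one:
  fixes M :: "'a::field^3^3"
  assumes p: "M *v p = mu *s p" and plane: "\<And>x. dot3 w x = 0 \<Longrightarrow> M *v x = lam *s x"
    and "dot3 w p \<noteq> 0" "lam \<noteq> 0"
  shows "M *v z = lam *s (z + ((mu - lam) / (lam * dot3 w p) * dot3 w z) *s p)"
proof -
  define t where "t = dot3 w z / dot3 w p"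
  have "M *v (z - t *s p) = lam *s (z - t *s p)"
    using assms(3) by (intro plane) (simp add: t_def dot3_simps)
  then have "M *v z = lam *s z + (t * (mu - lam)) *s p"
    using p by (simp add: matrix_vector_mult_diff_distrib vector_scalar_commute vec3_eq_iff
        algebra_simps)
  moreover have "t * (mu - lam) = lam * ((mu - lam) / (lam * dot3 w p) * dot3 w z)"
    using assms(3,4) by (simp add: t_def field_simps)
  ultimately show ?thesis by simp
qed

lemma involutory_homology_normal_form:
  fixes p :: "'a::field^3"
  assumes hom: "involutory_homology f P" and P: "P = pt p" "p \<noteq> 0"
  obtains v where "dot3 v p \<noteq> 0"
    and "\<And>z. z \<noteq> 0 \<Longrightarrow> z + dot3 v z *s p \<noteq> 0 \<and> f (pt z) = pt (z + dot3 v z *s p)"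
    and "\<And>Q. Q \<notin> pg_points \<Longrightarrow> f Q = undefined"
proof -
  obtain M where inv: "invertible M" and fM: "f = proj_of M"
    using hom unfolding involutory_homology_def is_projectivity_def by blast
  have fpt: "f (pt z) = pt (M *v z)" if "z \<noteq> 0" for z using proj_of_pt[OF that] fM by simp
  have "pt (M *v p) = pt p" using hom P fpt[OF P(2)] unfolding involutory_homology_def by simp
  then obtain mu where mu: "M *v p = mu *s p" using pt_eqD by blast
  obtain l where l: "l \<in> pg_lines" "P \<notin> l" "\<forall>Q\<in>l. f Q = Q"
    using hom unfolding involutory_homology_def by blast
  then obtain w where w: "w \<noteq> 0" "l = line_of w" using pg_linesE by blast
  have wp: "dot3 w p \<noteq> 0" using l(2) w(2) pt_in_line_of_iff[OF P(2)] P(1) by simp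
  have "\<forall>Q\<in>line_of w. proj_of M Q = Q" using l(3) w(2) fM by simp
  then obtain lam where "lam \<noteq> 0" and lam: "\<And>x. dot3 w x = 0 \<Longrightarrow> M *v x = lam *s x"
    using proj_of_fixing_line_pointwise[OF inv w(1)] by blast
  define v where "v = ((mu - lam) / (lam * dot3 w p)) *s w"
  have Mz: "M *v z = lam *s (z + dot3 v z *s p)" for z
    using matrix_scalar_plus_rank_one[OF mu lam wp \<open>lam \<noteq> 0\<close>] by (simp add: v_def dot3_simps)
  have image: "z + dot3 v z *s p \<noteq> 0 \<and> f (pt z) = pt (z + dot3 v z *s p)" if "z \<noteq> 0" for z
  proof
    show "z + dot3 v z *s p \<noteq> 0"
      using invertible_mult_neq_0[OF inv that] unfolding Mz by (metis vector_smult_rzero)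
    show "f (pt z) = pt (z + dot3 v z *s p)"
      using fpt[OF that] unfolding Mz by (simp only: pt_smult[OF \<open>lam \<noteq> 0\<close>])
  qed
  have "dot3 v p \<noteq> 0"
  proof
    assume "dot3 v p = 0"
    then have "mu = lam" using wp \<open>lam \<noteq> 0\<close> by (simp add: v_def dot3_simps field_simps)
    then have "f Q = Q" if "Q \<in> pg_points" for Q
      using that image by (auto elim!: pg_pointsE simp: v_def dot3_simps)
    then show False using hom unfolding involutory_homology_def by blast
  qed
  then show ?thesis
  proof (rule that)
    show "f Q = undefined" if "Q \<notin> pg_points" for Q
      using that unfolding fM proj_of_def by simp
  qed (use image in blast)
qed

lemma involutory_homology_center: "involutory_homology f P \<Longrightarrow> P \<in> pg_points"
  by (simp add: involutory_homology_def)

lemma involutory_homology_maps_line_through_center: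
  assumes "involutory_homology f P" "l \<in> pg_lines" "P \<in> l"
  shows "f ` l \<subseteq> l"
proof
  obtain p where p: "p \<noteq> 0" "P = pt p"
    using involutory_homology_center[OF assms(1)] by (rule pg_pointsE)
  obtain v where v: "dot3 v p \<noteq> 0"
    "\<And>z. z \<noteq> 0 \<Longrightarrow> z + dot3 v z *s p \<noteq> 0 \<and> f (pt z) = pt (z + dot3 v z *s p)"
    "\<And>Q. Q \<notin> pg_points \<Longrightarrow> f Q = undefined"
    using involutory_homology_normal_form[OF assms(1) p(2,1)] by blast
  obtain u where u: "u \<noteq> 0" "l = line_of u" using assms(2) by (rule pg_linesE)
  have up: "dot3 u p = 0" using assms(3) u(2) p pt_in_line_of_iff by blast
  fix Y assume "Y \<in> f ` l"
  then obtain z where z: "z \<noteq> 0" "dot3 u z = 0" "Y = f (pt z)"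
    using u(2) unfolding line_of_def by blast
  then have "z + dot3 v z *s p \<noteq> 0" "Y = pt (z + dot3 v z *s p)" using v(2) by simp_all
  then show "Y \<in> l"
    using pt_in_line_of_iff[of "z + dot3 v z *s p" u] z(2) up u(2) by (simp add: dot3_simps)
qed

lemma involutory_homology_fixed_points:
  assumes "involutory_homology f P"
  obtains ax where "ax \<in> pg_lines" "P \<notin> ax" "\<And>Q. Q \<in> pg_points \<Longrightarrow> f Q = Q \<Longrightarrow> Q \<noteq> P \<Longrightarrow> Q \<in> ax"
proof -
  obtain p where p: "p \<noteq> 0" "P = pt p"
    using involutory_homology_center[OF assms] by (rule pg_pointsE)
  obtain v where v: "dot3 v p \<noteq> 0"
    "\<And>z. z \<noteq> 0 \<Longrightarrow> z + dot3 v z *s p \<noteq> 0 \<and> f (pt z) = pt (z + dot3 v z *s p)"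
    "\<And>Q. Q \<notin> pg_points \<Longrightarrow> f Q = undefined"
    using involutory_homology_normal_form[OF assms p(2,1)] by blast
  have "v \<noteq> 0" using v(1) by (auto simp: dot3_simps)
  have off_axis: "P \<notin> line_of v" using v(1) p pt_in_line_of_iff by blast
  have on_axis: "Q \<in> line_of v" if Q: "Q \<in> pg_points" "f Q = Q" "Q \<noteq> P" for Q
  proof -
    obtain z where z: "z \<noteq> 0" "Q = pt z" using Q(1) by (rule pg_pointsE)
    have "cross3 p z \<noteq> 0" using cross3_neq_0_if_pt_neq p z Q(3) by blast
    moreover have "pt (z + dot3 v z *s p) = pt (z + 0 *s p)" using v(2)[OF z(1)] z(2) Q(2) by simp
    ultimately have "dot3 v z = 0" by (rule pt_add_smult_cancel)
    then show ?thesis using z pt_in_line_of_iff by blast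
  qed
  show ?thesis
  proof (rule that)
    show "line_of v \<in> pg_lines" using \<open>v \<noteq> 0\<close> by (rule line_of_in_pg_lines)
  qed (use off_axis on_axis in blast)+
qed

lemma involutory_homology_eqI:
  assumes f: "involutory_homology f P" and g: "involutory_homology g P"
    and pts: "X \<in> pg_points" "Y \<in> pg_points" "Z \<in> pg_points" "P \<notin> {X, Y, Z}"
    and nc: "\<not> collinear_pts {X, Y, Z}"
    and agree: "f X = g X" "f Y = g Y" "f Z = g Z"
  shows "f = g"
proof -
  obtain p where p: "p \<noteq> 0" "P = pt p"
    using involutory_homology_center[OF f] by (rule pg_pointsE)
  obtain v where v: "dot3 v p \<noteq> 0"
    "\<And>z. z \<noteq> 0 \<Longrightarrow> z + dot3 v z *s p \<noteq> 0 \<and> f (pt z) = pt (z + dot3 v z *s p)"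
    "\<And>Q. Q \<notin> pg_points \<Longrightarrow> f Q = undefined"
    using involutory_homology_normal_form[OF f p(2,1)] by blast
  obtain v' where v': "dot3 v' p \<noteq> 0"
    "\<And>z. z \<noteq> 0 \<Longrightarrow> z + dot3 v' z *s p \<noteq> 0 \<and> g (pt z) = pt (z + dot3 v' z *s p)"
    "\<And>Q. Q \<notin> pg_points \<Longrightarrow> g Q = undefined"
    using involutory_homology_normal_form[OF g p(2,1)] by blast
  have same: "dot3 (v - v') z = 0" if "z \<noteq> 0" "P \<noteq> pt z" "f (pt z) = g (pt z)" for z
  proof -
    have "cross3 p z \<noteq> 0" using cross3_neq_0_if_pt_neq p that(1,2) by metis
    moreover have "pt (z + dot3 v z *s p) = pt (z + dot3 v' z *s p)" using v v' that by simp
    ultimately show ?thesis by (simp add: dot3_simps pt_add_smult_cancel)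
  qed
  obtain x y z where xyz: "x \<noteq> 0" "X = pt x" "y \<noteq> 0" "Y = pt y" "z \<noteq> 0" "Z = pt z"
    using pts(1-3) by (metis pg_pointsE)
  have "dot3 (v - v') x = 0" "dot3 (v - v') y = 0" "dot3 (v - v') z = 0"
    using same[of x] same[of y] same[of z] xyz pts(4) agree by simp_all
  moreover have "det3 x y z \<noteq> 0" using nc xyz collinear_pts_pt_iff by blast
  ultimately have "v - v' = 0" using det3_eq_0_if_orthogonal by blast
  then show ?thesis
  proof (intro ext)
    fix Q show "f Q = g Q"
      by (cases "Q \<in> pg_points") (use v v' \<open>v - v' = 0\<close> in \<open>auto elim: pg_pointsE\<close>)
  qed
qed

lemma exists_off_point_and_line:
  fixes p v :: "'a::field^3"
  assumes "p \<noteq> 0" "dot3 v p \<noteq> 0"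
  obtains q where "cross3 p q \<noteq> 0" "dot3 v q \<noteq> 0"
proof -
  have "v \<noteq> 0" using assms(2) by (auto simp: dot3_simps)
  obtain w where w: "w \<noteq> 0" "dot3 v w = 0"
    using exists_orthogonal2[OF \<open>v \<noteq> 0\<close>, of v] by (metis dot3_commute)
  have "pt p \<noteq> pt w" using assms(2) w(2) by (auto dest!: pt_eqD simp: dot3_simps)
  then have "cross3 p w \<noteq> 0" using cross3_neq_0_if_pt_neq assms(1) w(1) by blast
  moreover have "cross3 p (w + p) = cross3 p w" by (simp add: vec3_eq_iff algebra_simps)
  moreover have "dot3 v (w + p) \<noteq> 0" using assms(2) w(2) by (simp add: dot3_simps)
  ultimately show ?thesis by (intro that[of "w + p"]) simp_all
qed

lemma outer_mult_vector: "(\<chi> i j. p$i * v$j) *v z = dot3 v z *s (p::'a::field^3)"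
  by (simp add: matrix_vector_mult_def vec_eq_iff dot3_def sum_distrib_left mult_ac)

lemma involutory_homology_rank_one_update:
  fixes p v :: "'a::field^3"
  assumes two: "(2::'a) \<noteq> 0" and vp: "dot3 v p = -2"
  defines "M \<equiv> mat 1 + (\<chi> i j. p$i * v$j)"
  shows "\<And>z. z \<noteq> 0 \<Longrightarrow> proj_of M (pt z) = pt (z + dot3 v z *s p)"
    and "involutory_homology (proj_of M) (pt p)"
proof -
  define F where "F z = z + dot3 v z *s p" for z
  have Mv: "M *v z = F z" for z
    by (simp add: M_def F_def matrix_vector_mult_add_rdistrib outer_mult_vector)
  have FF: "F (F z) = z" for z
  proof -
    have "dot3 v (F z) = - dot3 v z" using vp by (simp add: F_def dot3_simps)
    then show ?thesis by (simp add: F_def vec3_eq_iff algebra_simps)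
  qed
  have F0: "F z \<noteq> 0" if "z \<noteq> 0" for z
  proof
    assume "F z = 0"
    then have "F (F z) = 0" by (simp add: F_def dot3_simps)
    with FF that show False by simp
  qed
  have fpt: "proj_of M (pt z) = pt (F z)" if "z \<noteq> 0" for z
    using proj_of_pt[OF that] Mv by simp
  then show "\<And>z. z \<noteq> 0 \<Longrightarrow> proj_of M (pt z) = pt (z + dot3 v z *s p)" by (simp add: F_def)
  have "M ** M = mat 1"
    by (subst matrix_eq) (simp add: matrix_vector_mul_assoc[symmetric] Mv FF)
  then have "is_projectivity (proj_of M)"
    unfolding is_projectivity_def invertible_def by blast
  moreover have "\<forall>Q\<in>pg_points. proj_of M (proj_of M Q) = Q"
    using fpt F0 FF by (auto elim!: pg_pointsE)
  moreover have "v \<noteq> 0" "p \<noteq> 0" using vp two by (auto simp: dot3_simps dot3_expand)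
  moreover have "\<exists>Q\<in>pg_points. proj_of M Q \<noteq> Q"
  proof -
    have "dot3 v p \<noteq> 0" using vp two by simp
    then obtain q where q: "cross3 p q \<noteq> 0" "dot3 v q \<noteq> 0"
      using exists_off_point_and_line[OF \<open>p \<noteq> 0\<close>] by blast
    have "q \<noteq> 0"
    proof
      assume "q = 0"
      with q(1) show False by (simp add: vec3_eq_iff)
    qed
    have "pt (q + dot3 v q *s p) \<noteq> pt (q + 0 *s p)" using pt_add_smult_cancel[OF q(1)] q(2) by blast
    then have "proj_of M (pt q) \<noteq> pt q" using fpt[OF \<open>q \<noteq> 0\<close>] by (simp add: F_def)
    then show ?thesis using pt_in_pg_points[OF \<open>q \<noteq> 0\<close>] by blast
  qed
  moreover have "proj_of M (pt p) = pt p"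
  proof -
    have "F p = (-1) *s p" using vp by (simp add: F_def vec3_eq_iff algebra_simps)
    then show ?thesis using fpt[OF \<open>p \<noteq> 0\<close>] pt_smult[of "-1" p] by simp
  qed
  moreover have "\<exists>l\<in>pg_lines. pt p \<notin> l \<and> (\<forall>Q\<in>l. proj_of M Q = Q)"
  proof (intro bexI conjI ballI)
    show "pt p \<notin> line_of v" using pt_in_line_of_iff[OF \<open>p \<noteq> 0\<close>] vp two by simp
    show "proj_of M Q = Q" if "Q \<in> line_of v" for Q
      using that fpt unfolding line_of_def by (auto simp: F_def)
  qed (rule line_of_in_pg_lines[OF \<open>v \<noteq> 0\<close>])
  moreover have "pt p \<in> pg_points" using \<open>p \<noteq> 0\<close> by (rule pt_in_pg_points)
  ultimately show "involutory_homology (proj_of M) (pt p)"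
    unfolding involutory_homology_def by blast
qed

lemma triangle_side_coordinates:
  assumes pts: "A \<in> pg_points" "B \<in> pg_points" "C \<in> (pg_points :: 'a::field pgpoint set)"
    "P \<in> pg_points"
    and nc: "\<not> collinear_pts {A, B, C}" and col: "collinear_pts {P, B, C}"
    and PBC: "P \<noteq> B" "P \<noteq> C"
  obtains a b c where "A = pt a" "B = pt b" "C = pt c" "P = pt (b + c)" "det3 a b c \<noteq> 0"
proof -
  obtain a b0 c0 p0 where reps: "a \<noteq> 0" "A = pt a" "b0 \<noteq> 0" "B = pt b0" "c0 \<noteq> 0" "C = pt c0"
    "p0 \<noteq> 0" "P = pt p0"
    using pts by (metis pg_pointsE)
  define D where "D = det3 a b0 c0"
  have "D \<noteq> 0" using nc reps collinear_pts_pt_iff unfolding D_def by blast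
  have "det3 p0 b0 c0 = 0" using col reps collinear_pts_pt_iff by blast
  then have cr: "D *s p0 = det3 a p0 c0 *s b0 + det3 a b0 p0 *s c0"
    using cramer3[of a b0 c0 p0] by (simp add: D_def)
  have "pt (D *s p0) = P" using pt_smult[OF \<open>D \<noteq> 0\<close>] reps by simp
  have "det3 a p0 c0 \<noteq> 0"
  proof
    assume "det3 a p0 c0 = 0"
    then have "D *s p0 = det3 a b0 p0 *s c0" using cr by simp
    moreover have "D *s p0 \<noteq> 0" using \<open>D \<noteq> 0\<close> reps(7) by (simp add: vec3_eq_iff vec3_neq_0_iff)
    ultimately have "det3 a b0 p0 \<noteq> 0" by auto
    then show False
      using \<open>D *s p0 = det3 a b0 p0 *s c0\<close> \<open>pt (D *s p0) = P\<close> PBC(2) reps(6) by (simp add: pt_smult)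
  qed
  have "det3 a b0 p0 \<noteq> 0"
  proof
    assume "det3 a b0 p0 = 0"
    then have "D *s p0 = det3 a p0 c0 *s b0" using cr by simp
    then show False
      using \<open>pt (D *s p0) = P\<close> PBC(1) reps(4) \<open>det3 a p0 c0 \<noteq> 0\<close> by (simp add: pt_smult)
  qed
  define b where "b = det3 a p0 c0 *s b0"
  define c where "c = det3 a b0 p0 *s c0"
  have BC: "B = pt b" "C = pt c" "P = pt (b + c)"
    using reps pt_smult \<open>det3 a p0 c0 \<noteq> 0\<close> \<open>det3 a b0 p0 \<noteq> 0\<close> \<open>pt (D *s p0) = P\<close> cr
    by (simp_all add: b_def c_def pt_smult)
  moreover have "det3 a b c \<noteq> 0"
    using \<open>D \<noteq> 0\<close> \<open>det3 a p0 c0 \<noteq> 0\<close> \<open>det3 a b0 p0 \<noteq> 0\<close> by (simp add: b_def c_def D_def det3_smult)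
  ultimately show ?thesis using that reps(2) by blast
qed

text \<open>The axis joins \<open>A\<close> to the harmonic conjugate of \<open>P\<close> with respect to \<open>B\<close> and \<open>C\<close>;
  \<open>2 \<noteq> 0\<close> keeps \<open>P\<close> off the axis.\<close>
lemma harmonic_homology_exists:
  assumes two: "(2::'a::field) \<noteq> 0"
    and pts: "A \<in> pg_points" "B \<in> pg_points" "C \<in> (pg_points :: 'a pgpoint set)" "P \<in> pg_points"
    and nc: "\<not> collinear_pts {A, B, C}" and col: "collinear_pts {P, B, C}"
    and PBC: "P \<noteq> B" "P \<noteq> C"
  obtains f where "involutory_homology f P" "f A = A" "f B = C" "f C = B"
proof -
  obtain a b c where abc: "A = pt a" "B = pt b" "C = pt c" "P = pt (b + c)" "det3 a b c \<noteq> 0"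
    using triangle_side_coordinates[OF pts nc col PBC] by blast
  \<comment> \<open>the linear form vanishing at \<open>a\<close> and \<open>b - c\<close>, normalised by \<open>v b = v c = -1\<close>\<close>
  define v where "v = (- 1 / det3 a b c) *s (cross3 c a + cross3 a b)"
  have "det3 b c a = det3 a b c" "det3 c a b = det3 a b c"
    by (simp_all add: det3_expand algebra_simps)
  then have v: "dot3 v a = 0" "dot3 v b = -1" "dot3 v c = -1"
    using abc(5) by (simp_all add: v_def dot3_simps dot3_cross3 det3_repeated)
  have "dot3 v (b + c) = -2" using v by (simp add: dot3_simps)
  define M where "M = mat 1 + (\<chi> i j. (b + c)$i * v$j)"
  note hom = involutory_homology_rank_one_update[OF two \<open>dot3 v (b + c) = -2\<close>, folded M_def]
  have "a \<noteq> 0" "b \<noteq> 0" "c \<noteq> 0" using abc(5) by (auto simp: det3_expand)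
  have neg_one_neq_0: "(-1::'a) \<noteq> 0" by simp
  have images: "a + dot3 v a *s (b + c) = a" "b + dot3 v b *s (b + c) = (-1) *s c"
    "c + dot3 v c *s (b + c) = (-1) *s b"
    using v by (simp_all add: vec3_eq_iff algebra_simps)
  have "proj_of M A = A" using hom(1)[OF \<open>a \<noteq> 0\<close>] abc(1) by (simp only: images)
  moreover have "proj_of M B = C"
    using hom(1)[OF \<open>b \<noteq> 0\<close>] abc pt_smult[OF neg_one_neq_0, of c] by (simp only: images)
  moreover have "proj_of M C = B"
    using hom(1)[OF \<open>c \<noteq> 0\<close>] abc pt_smult[OF neg_one_neq_0, of b] by (simp only: images)
  ultimately show ?thesis using that hom(2) abc(4) by blast
qed

section \<open>Dual 3-nets\<close>

lemma dual_3net_iff: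
  "dual_3net L1 L2 L3 n \<longleftrightarrow>
     L1 \<subseteq> pg_points \<and> L2 \<subseteq> pg_points \<and> L3 \<subseteq> pg_points \<and>
     finite L1 \<and> finite L2 \<and> finite L3 \<and> card L1 = n \<and> card L2 = n \<and> card L3 = n \<and>
     L1 \<inter> L2 = {} \<and> L1 \<inter> L3 = {} \<and> L2 \<inter> L3 = {} \<and>
     (\<forall>l\<in>pg_lines. (l \<inter> L1 \<noteq> {} \<and> l \<inter> L2 \<noteq> {}) \<or> (l \<inter> L1 \<noteq> {} \<and> l \<inter> L3 \<noteq> {})
        \<or> (l \<inter> L2 \<noteq> {} \<and> l \<inter> L3 \<noteq> {})
        \<longrightarrow> card (l \<inter> L1) = 1 \<and> card (l \<inter> L2) = 1 \<and> card (l \<inter> L3) = 1)"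
  unfolding dual_3net_def Let_def by (auto simp: Int_commute)

lemma dual_3net_components:
  assumes "dual_3net L1 L2 L3 n"
  shows "L1 \<subseteq> pg_points" "L2 \<subseteq> pg_points" "L3 \<subseteq> pg_points" "finite L2"
    "card L1 = n" "card L2 = n" "card L3 = n" "L1 \<inter> L2 = {}" "L1 \<inter> L3 = {}" "L2 \<inter> L3 = {}"
  using assms unfolding dual_3net_iff by simp_all

lemma dual_3net_rotate: "dual_3net L1 L2 L3 n \<Longrightarrow> dual_3net L2 L3 L1 n"
  unfolding dual_3net_iff by (auto simp: Int_commute)

lemma dual_3net_swap: "dual_3net L1 L2 L3 n \<Longrightarrow> dual_3net L1 L3 L2 n"
  unfolding dual_3net_iff by (auto simp: Int_commute)

lemma dual_3net_line_meets:
  assumes "dual_3net L1 L2 L3 n" "l \<in> pg_lines" "X \<in> l" "X \<in> L1" "Y \<in> l" "Y \<in> L2"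
  shows "l \<inter> L1 = {X}" "l \<inter> L2 = {Y}" "\<exists>Z. l \<inter> L3 = {Z}"
proof -
  have card: "card (l \<inter> L1) = 1" "card (l \<inter> L2) = 1" "card (l \<inter> L3) = 1"
    using assms unfolding dual_3net_iff by blast+
  show "l \<inter> L1 = {X}" "l \<inter> L2 = {Y}"
    using card(1,2) assms(3-6) by (metis IntI card_1_singletonE singletonD)+
  show "\<exists>Z. l \<inter> L3 = {Z}" using card(3) by (simp add: card_1_singleton_iff)
qed

lemma dual_3net_not_on_line_of_component:
  assumes "dual_3net L1 L2 L3 n" "4 \<le> n" "l \<in> pg_lines" "L2 \<subseteq> l" "X \<in> L1"
  shows "X \<notin> l"
proof
  assume "X \<in> l"
  have "card L2 = n" using dual_3net_components(6)[OF assms(1)] .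
  then obtain Y where "Y \<in> L2" using assms(2) by fastforce
  then have "l \<inter> L2 = {Y}"
    using dual_3net_line_meets(2)[OF assms(1,3) \<open>X \<in> l\<close> assms(5)] assms(4) by blast
  then show False using assms(2,4) \<open>card L2 = n\<close> by (simp add: Int_absorb1)
qed

lemma triangular_dual_3net_rotate:
  assumes "triangular_dual_3net L1 L2 L3 n"
  shows "triangular_dual_3net L2 L3 L1 n"
proof -
  obtain A B C l1 l2 l3 where net: "dual_3net L1 L2 L3 n" "4 \<le> n"
    and ABC: "A \<in> pg_points" "B \<in> pg_points" "C \<in> pg_points" "\<not> collinear_pts {A, B, C}"
    and lines: "l1 \<in> pg_lines" "l2 \<in> pg_lines" "l3 \<in> pg_lines"
    and inc: "B \<in> l1" "C \<in> l1" "A \<in> l2" "C \<in> l2" "A \<in> l3" "B \<in> l3"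
    and sides: "L1 \<subseteq> l1" "L2 \<subseteq> l2" "L3 \<subseteq> l3"
    using assms unfolding triangular_dual_3net_def by blast
  moreover have "\<not> collinear_pts {B, C, A}" using ABC(4) by (simp add: insert_commute)
  ultimately show ?thesis
    unfolding triangular_dual_3net_def using dual_3net_rotate[OF net(1)] by blast
qed

text \<open>If both net points other than \<open>P\<close> on the line were fixed, the line would be the
  axis, which does not contain the center.\<close>
lemma involutory_homology_swaps_net_points:
  assumes net: "dual_3net L1 L2 L3 n"
    and f: "involutory_homology f P" "preserves_net f L1 L2 L3" and P: "P \<in> L1"
    and k: "k \<in> pg_lines" "P \<in> k" "Q \<in> k" "Q \<in> L2" "R \<in> k" "R \<in> L3"
  shows "f Q = R" "f R = Q"
proof -
  obtain Z where "k \<inter> L3 = {Z}" using dual_3net_line_meets(3)[OF net k(1,2) P k(3,4)] by blast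
  then have "k \<inter> L3 = {R}" using k(5,6) by blast
  then have net_on_k: "k \<inter> (L1 \<union> L2 \<union> L3) = {P, Q, R}"
    using dual_3net_line_meets(1,2)[OF net k(1,2) P k(3,4)] by (auto simp: Int_Un_distrib)
  have ff: "\<And>X. X \<in> pg_points \<Longrightarrow> f (f X) = X" and "f P = P"
    using f(1) unfolding involutory_homology_def by blast+
  have pts: "P \<in> pg_points" "Q \<in> pg_points" "R \<in> pg_points"
    using pg_lines_subset_points[OF k(1)] k by blast+
  have "P \<noteq> Q" "P \<noteq> R" "Q \<noteq> R" using dual_3net_components(8-10)[OF net] P k(4,6) by (auto simp: disjoint_iff)
  have "f X \<in> {P, Q, R}" if "X \<in> k" "X \<in> L1 \<union> L2 \<union> L3" for X
  proof -
    have "f X \<in> k" using involutory_homology_maps_line_through_center[OF f(1) k(1,2)] that(1)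
      by blast
    moreover have "f X \<in> L1 \<union> L2 \<union> L3" using f(2) that(2) unfolding preserves_net_def by blast
    ultimately have "f X \<in> k \<inter> (L1 \<union> L2 \<union> L3)" by blast
    then show ?thesis unfolding net_on_k .
  qed
  moreover have "f X \<noteq> P" if "X \<in> pg_points" "X \<noteq> P" for X
    using ff[OF that(1)] \<open>f P = P\<close> that(2) by metis
  ultimately have fQR: "f Q \<in> {Q, R}" "f R \<in> {Q, R}"
    using pts k(3-6) \<open>P \<noteq> Q\<close> \<open>P \<noteq> R\<close> by blast+
  obtain ax where ax: "ax \<in> pg_lines" "P \<notin> ax"
    "\<And>X. X \<in> pg_points \<Longrightarrow> f X = X \<Longrightarrow> X \<noteq> P \<Longrightarrow> X \<in> ax"
    using involutory_homology_fixed_points[OF f(1)] by blast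
  show "f Q = R"
  proof (rule ccontr)
    assume "f Q \<noteq> R"
    then have "f Q = Q" using fQR by blast
    moreover have "f R \<noteq> Q" using ff[OF pts(3)] \<open>f Q = Q\<close> \<open>Q \<noteq> R\<close> by metis
    ultimately have "f Q = Q" "f R = R" using fQR by blast+
    then have "Q \<in> ax" "R \<in> ax" using ax(3) pts \<open>P \<noteq> Q\<close> \<open>P \<noteq> R\<close> by auto
    then have "k = ax" using pg_lines_eqI k ax(1) \<open>Q \<noteq> R\<close> by blast
    then show False using ax(2) k(2) by blast
  qed
  then show "f R = Q" using ff pts by metis
qed

lemma dual_3net_noncollinear_triple:
  assumes net: "dual_3net L1 L2 L3 n" "4 \<le> n" and l2: "l2 \<in> pg_lines" "L2 \<subseteq> l2"
  obtains Q1 Q2 R where "Q1 \<in> L2" "Q2 \<in> L2" "R \<in> L3" "\<not> collinear_pts {Q1, Q2, R}"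
proof -
  have "\<not> card L2 \<le> Suc 0" using dual_3net_components(6)[OF net(1)] net(2) by simp
  then obtain Q1 Q2 where Q: "Q1 \<in> L2" "Q2 \<in> L2" "Q1 \<noteq> Q2"
    using card_le_Suc0_iff_eq[OF dual_3net_components(4)[OF net(1)]] by blast
  have "L3 \<noteq> {}" using dual_3net_components(7)[OF net(1)] net(2) by auto
  then obtain R where R: "R \<in> L3" by blast
  have "R \<notin> l2"
    using dual_3net_not_on_line_of_component[OF dual_3net_swap[OF dual_3net_rotate[OF
          dual_3net_rotate[OF net(1)]]] net(2) l2 R] .
  have "\<not> collinear_pts {Q1, Q2, R}"
  proof
    assume "collinear_pts {Q1, Q2, R}"
    then obtain m where "m \<in> pg_lines" "Q1 \<in> m" "Q2 \<in> m" "R \<in> m"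
      unfolding collinear_pts_def by blast
    moreover have "Q1 \<in> l2" "Q2 \<in> l2" using Q l2(2) by blast+
    ultimately have "m = l2" using pg_lines_eqI l2(1) Q(3) by blast
    with \<open>R \<notin> l2\<close> \<open>R \<in> m\<close> show False by blast
  qed
  with Q R show ?thesis using that by blast
qed

lemma involutory_homology_preserving_net_unique:
  assumes net: "dual_3net L1 L2 L3 n" "4 \<le> n" and l2: "l2 \<in> pg_lines" "L2 \<subseteq> l2"
    and P: "P \<in> L1"
    and f: "involutory_homology f P" "preserves_net f L1 L2 L3"
    and g: "involutory_homology g P" "preserves_net g L1 L2 L3"
  shows "f = g"
proof -
  have pts: "L1 \<subseteq> pg_points" "L2 \<subseteq> pg_points" "L3 \<subseteq> pg_points"
    using dual_3net_components(1-3)[OF net(1)] by blast+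
  have agree: "f Q = g Q \<and> f R = g R" if k: "k \<in> pg_lines" "P \<in> k" "Q \<in> k" "Q \<in> L2" "R \<in> k" "R \<in> L3"
    for k Q R
    using involutory_homology_swaps_net_points[OF net(1) f P k]
      involutory_homology_swaps_net_points[OF net(1) g P k] by simp
  have "P \<in> pg_points" using pts(1) P by blast
  then have line_through_P: "\<exists>k\<in>pg_lines. P \<in> k \<and> X \<in> k" if "X \<in> pg_points" for X
    using exists_line_through[OF _ that] by blast
  have agree2: "f Q = g Q" if Q: "Q \<in> L2" for Q
  proof -
    obtain k where k: "k \<in> pg_lines" "P \<in> k" "Q \<in> k" using line_through_P pts(2) Q by blast
    obtain R where "k \<inter> L3 = {R}" using dual_3net_line_meets(3)[OF net(1) k(1,2) P k(3) Q] by blast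
    then have "R \<in> k \<inter> L3" by simp
    then show ?thesis using agree[OF k Q] by blast
  qed
  have agree3: "f R = g R" if R: "R \<in> L3" for R
  proof -
    obtain k where k: "k \<in> pg_lines" "P \<in> k" "R \<in> k" using line_through_P pts(3) R by blast
    obtain Q where "k \<inter> L2 = {Q}"
      using dual_3net_line_meets(3)[OF dual_3net_swap[OF net(1)] k(1,2) P k(3) R] by blast
    then have "Q \<in> k \<inter> L2" by simp
    then show ?thesis using agree[OF k(1,2) _ _ k(3) R] by blast
  qed
  obtain Q1 Q2 R where Q: "Q1 \<in> L2" "Q2 \<in> L2" and R: "R \<in> L3"
    and noncol: "\<not> collinear_pts {Q1, Q2, R}"
    using dual_3net_noncollinear_triple[OF net l2] by blast
  have "P \<notin> {Q1, Q2, R}" using dual_3net_components(8,9)[OF net(1)] P Q R by (auto simp: disjoint_iff)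
  moreover have "Q1 \<in> pg_points" "Q2 \<in> pg_points" "R \<in> pg_points" using pts Q R by blast+
  ultimately show ?thesis
    using involutory_homology_eqI[OF f(1) g(1) _ _ _ _ noncol] agree2 agree3 Q R by blast
qed

lemma involutory_homology_maps_second_to_third:
  assumes net: "dual_3net L1 L2 L3 n" and f: "involutory_homology f P" and P: "P \<in> L1"
    and l3: "l3 \<in> pg_lines" "L3 \<subseteq> l3" "P \<notin> l3" and image: "f ` L2 \<subseteq> l3"
  shows "f ` L2 \<subseteq> L3"
proof
  fix Y assume "Y \<in> f ` L2"
  then obtain Q where Q: "Q \<in> L2" "Y = f Q" by blast
  have pts: "P \<in> pg_points" "Q \<in> pg_points" using dual_3net_components(1,2)[OF net] P Q(1) by blast+
  obtain k where k: "k \<in> pg_lines" "P \<in> k" "Q \<in> k" using exists_line_through[OF pts] by blast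
  obtain R where "k \<inter> L3 = {R}" using dual_3net_line_meets(3)[OF net k(1,2) P k(3) Q(1)] by blast
  then have "R \<in> k \<inter> L3" by simp
  then have R: "R \<in> k" "R \<in> L3" by simp_all
  have "f Q \<in> k" using involutory_homology_maps_line_through_center[OF f k(1,2)] k(3) by blast
  moreover have "f Q \<in> l3" using image Q(1) by blast
  moreover have "R \<in> l3" using R(2) l3(2) by blast
  moreover have "k \<noteq> l3" using k(2) l3(3) by blast
  ultimately show "Y \<in> L3" using pg_lines_eqI[OF k(1) l3(1), of "f Q" R] R Q(2) by blast
qed

lemma projectivity_maps_first_component:
  assumes net: "dual_3net L1 L2 L3 n" and f: "is_projectivity f" and "L2 \<noteq> {}"
    and swap: "f ` L2 \<subseteq> L3" "f ` L3 \<subseteq> L2"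
    and l1: "l1 \<in> pg_lines" "L1 \<subseteq> l1" "f ` L1 \<subseteq> l1" "L3 \<inter> l1 = {}"
  shows "f ` L1 \<subseteq> L1"
proof
  fix Y assume "Y \<in> f ` L1"
  then obtain X where X: "X \<in> L1" "Y = f X" by blast
  obtain Q where Q: "Q \<in> L2" using \<open>L2 \<noteq> {}\<close> by blast
  have pts: "X \<in> pg_points" "Q \<in> pg_points" using dual_3net_components(1,2)[OF net] X(1) Q by blast+
  obtain k where k: "k \<in> pg_lines" "X \<in> k" "Q \<in> k" using exists_line_through[OF pts] by blast
  obtain R where "k \<inter> L3 = {R}" using dual_3net_line_meets(3)[OF net k(1,2) X(1) k(3) Q] by blast
  then have "R \<in> k \<inter> L3" by simp
  then have R: "R \<in> k" "R \<in> L3" by simp_all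
  obtain m where m: "m \<in> pg_lines" "f ` k \<subseteq> m" using projectivity_maps_lines[OF f k(1)] by blast
  have "f R \<in> m" "f R \<in> L2" "f Q \<in> m" "f Q \<in> L3" using m(2) swap k(3) Q R by blast+
  then obtain X' where "m \<inter> L1 = {X'}"
    using dual_3net_line_meets(3)[OF dual_3net_rotate[OF net] m(1)] by blast
  then have "X' \<in> m \<inter> L1" by simp
  then have X': "X' \<in> m" "X' \<in> L1" by simp_all
  have "f X \<in> m" "f X \<in> l1" using m(2) k(2) X(1) l1(3) by blast+
  moreover have "X' \<in> l1" using X'(2) l1(2) by blast
  moreover have "m \<noteq> l1" using \<open>f Q \<in> m\<close> \<open>f Q \<in> L3\<close> l1(4) by blast
  ultimately show "Y \<in> L1" using pg_lines_eqI[OF m(1) l1(1), of "f X" X'] X' X(2) by blast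
qed

lemma preserves_net_if_involution:
  assumes "\<forall>Q\<in>pg_points. f (f Q) = Q" "L1 \<union> L2 \<union> L3 \<subseteq> pg_points"
    and image: "f ` (L1 \<union> L2 \<union> L3) \<subseteq> L1 \<union> L2 \<union> L3"
  shows "preserves_net f L1 L2 L3"
proof -
  have "L1 \<union> L2 \<union> L3 \<subseteq> f ` (L1 \<union> L2 \<union> L3)"
  proof
    fix X assume X: "X \<in> L1 \<union> L2 \<union> L3"
    then have "X = f (f X)" using assms(1,2) by blast
    moreover have "f X \<in> L1 \<union> L2 \<union> L3" using image X by blast
    ultimately show "X \<in> f ` (L1 \<union> L2 \<union> L3)" by blast
  qed
  then show ?thesis unfolding preserves_net_def using image by blast
qed

lemma involutory_homology_preserving_net_exists:
  assumes tri: "triangular_dual_3net L1 L2 L3 n" and two: "(2::'a::field) \<noteq> 0"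
    and P: "P \<in> (L1 :: 'a pgpoint set)"
  obtains f where "involutory_homology f P" "preserves_net f L1 L2 L3"
proof -
  obtain A B C l1 l2 l3 where net: "dual_3net L1 L2 L3 n" "4 \<le> n"
    and ABC: "A \<in> pg_points" "B \<in> pg_points" "C \<in> pg_points" "\<not> collinear_pts {A, B, C}"
    and lines: "l1 \<in> pg_lines" "l2 \<in> pg_lines" "l3 \<in> pg_lines"
    and inc: "B \<in> l1" "C \<in> l1" "A \<in> l2" "C \<in> l2" "A \<in> l3" "B \<in> l3"
    and sides: "L1 \<subseteq> l1" "L2 \<subseteq> l2" "L3 \<subseteq> l3"
    using tri unfolding triangular_dual_3net_def by blast
  have pts: "L1 \<subseteq> pg_points" "L2 \<subseteq> pg_points" "L3 \<subseteq> pg_points" and "card L2 = n"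
    using dual_3net_components[OF net(1)] by blast+
  have "P \<notin> l2" "P \<notin> l3"
    using dual_3net_not_on_line_of_component[OF net(1,2) lines(2) sides(2) P]
      dual_3net_not_on_line_of_component[OF dual_3net_swap[OF net(1)] net(2) lines(3) sides(3) P]
    by blast+
  then have "P \<noteq> B" "P \<noteq> C" using inc by blast+
  moreover have "collinear_pts {P, B, C}"
    unfolding collinear_pts_def using lines(1) inc(1,2) sides(1) P by blast
  moreover have "P \<in> pg_points" using pts(1) P by blast
  ultimately obtain f where f: "involutory_homology f P" "f A = A" "f B = C" "f C = B"
    using harmonic_homology_exists[OF two ABC(1-3) _ ABC(4)] by blast
  have proj: "is_projectivity f" using f(1) unfolding involutory_homology_def by blast
  have "\<not> collinear_pts {A, C, B}" "\<not> collinear_pts {B, C, A}"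
    using ABC(4) by (simp_all add: insert_commute)
  then have "A \<noteq> B" "A \<noteq> C" "B \<noteq> C"
    using distinct_if_not_collinear_pts ABC(1-4) by blast+
  have "f ` l2 \<subseteq> l3"
    using projectivity_maps_line_into[OF proj lines(2,3) inc(3,4)] f inc \<open>A \<noteq> B\<close> by simp
  then have L23: "f ` L2 \<subseteq> L3"
    using involutory_homology_maps_second_to_third[OF net(1) f(1) P lines(3) sides(3)] sides(2)
      \<open>P \<notin> l3\<close> by blast
  have "f ` l3 \<subseteq> l2"
    using projectivity_maps_line_into[OF proj lines(3,2) inc(5,6)] f inc \<open>A \<noteq> C\<close> by simp
  then have L32: "f ` L3 \<subseteq> L2"
    using involutory_homology_maps_second_to_third[OF dual_3net_swap[OF net(1)] f(1) P lines(2)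
        sides(2)] sides(3) \<open>P \<notin> l2\<close> by blast
  have "f ` l1 \<subseteq> l1"
    using projectivity_maps_line_into[OF proj lines(1,1) inc(1,2)] f inc \<open>B \<noteq> C\<close> by simp
  moreover have "L3 \<inter> l1 = {}"
    using dual_3net_not_on_line_of_component[OF dual_3net_rotate[OF dual_3net_rotate[OF net(1)]]
        net(2) lines(1) sides(1)] by blast
  moreover have "L2 \<noteq> {}" using \<open>card L2 = n\<close> net(2) by auto
  ultimately have L11: "f ` L1 \<subseteq> L1"
    using projectivity_maps_first_component[OF net(1) proj _ L23 L32 lines(1) sides(1)] sides(1)
    by blast
  have "\<forall>Q\<in>pg_points. f (f Q) = Q" using f(1) unfolding involutory_homology_def by blast
  moreover have "L1 \<union> L2 \<union> L3 \<subseteq> pg_points" using pts by blast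
  moreover have "f ` (L1 \<union> L2 \<union> L3) \<subseteq> L1 \<union> L2 \<union> L3" using L11 L23 L32 by blast
  ultimately have "preserves_net f L1 L2 L3" by (rule preserves_net_if_involution)
  then show ?thesis using that f(1) by blast
qed

lemma triangular_dual_3net_homology_ex1:
  assumes tri: "triangular_dual_3net L1 L2 L3 n" and two: "(2::'a::field) \<noteq> 0"
    and P: "P \<in> (L1 :: 'a pgpoint set)"
  shows "\<exists>!f. involutory_homology f P \<and> preserves_net f L1 L2 L3"
proof -
  obtain l2 where net: "dual_3net L1 L2 L3 n" "4 \<le> n" and l2: "l2 \<in> pg_lines" "L2 \<subseteq> l2"
    using tri unfolding triangular_dual_3net_def by blast
  obtain f where f: "involutory_homology f P" "preserves_net f L1 L2 L3"
    using involutory_homology_preserving_net_exists[OF tri two P] by blast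
  show ?thesis
  proof (rule ex1I[of _ f])
    show "involutory_homology f P \<and> preserves_net f L1 L2 L3" using f by blast
    show "g = f" if "involutory_homology g P \<and> preserves_net g L1 L2 L3" for g
      using involutory_homology_preserving_net_unique[OF net l2 P] that f by blast
  qed
qed

theorem proposition4p5:
  fixes L1 L2 L3 :: "'a::field pgpoint set" and n :: nat
  assumes "alg_closed TYPE('a)"
    and "(2::'a) \<noteq> 0"
    and "triangular_dual_3net L1 L2 L3 n"
  shows "\<forall>P\<in>L1 \<union> L2 \<union> L3. \<exists>!f. involutory_homology f P \<and> preserves_net f L1 L2 L3"
proof
  fix P assume "P \<in> L1 \<union> L2 \<union> L3"
  then consider "P \<in> L1" | "P \<in> L2" | "P \<in> L3" by blast
  then show "\<exists>!f. involutory_homology f P \<and> preserves_net f L1 L2 L3"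
  proof cases
    case 1
    then show ?thesis by (rule triangular_dual_3net_homology_ex1[OF assms(3,2)])
  next
    case 2
    have "triangular_dual_3net L2 L3 L1 n" using assms(3) by (rule triangular_dual_3net_rotate)
    then have "\<exists>!f. involutory_homology f P \<and> preserves_net f L2 L3 L1"
      using 2 by (rule triangular_dual_3net_homology_ex1[OF _ assms(2)])
    then show ?thesis unfolding preserves_net_def by (simp add: Un_ac)
  next
    case 3
    have "triangular_dual_3net L3 L1 L2 n"
      using triangular_dual_3net_rotate[OF triangular_dual_3net_rotate[OF assms(3)]] .
    then have "\<exists>!f. involutory_homology f P \<and> preserves_net f L3 L1 L2"
      using 3 by (rule triangular_dual_3net_homology_ex1[OF _ assms(2)])
    then show ?thesis unfolding preserves_net_def by (simp add: Un_ac)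
  qed
qed

end
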